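(* Let $\mathbf{M}$ be the canonical adjacency matrix of a connected graph $G$ on $n\ge 2$ vertices. Then the $(n-1)\times(n-1)$ matrix obtained from $\mathbf{M}$ by deleting its last row and last column is the canonical adjacency matrix of a connected graph (namely the subgraph of $G$ induced by all vertices but the last one in the ordering of $\mathbf{M}$). In particular, the vertex corresponding to the last row/column of $\mathbf{M}$ is not a cut vertex of $G$.
   Context: For an $n\times n$ adjacency matrix $\mathbf{M}$ of a finite simple graph (with respect to some ordering of its vertices), its bit-string is obtained by concatenating the entries strictly above the diagonal column by column, left to right, reading each column from top to bottom. The canonical adjacency matrix of a graph $G$ is the unique adjacency matrix of $G$ (over all orderings of its vertices) whose bit-string is lexicographically greatest. It is known that deleting the last row and column of a canonical adjacency matrix of $G$ yields the canonical adjacency matrix of the corresponding induced subgraph. *)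

theory Defs
  imports Main
begin

definition simple_graph :: "'a set \<Rightarrow> ('a \<Rightarrow> 'a \<Rightarrow> bool) \<Rightarrow> bool" where
  "simple_graph V E \<longleftrightarrow> finite V \<and> (\<forall>x y. E x y \<longrightarrow> x \<in> V \<and> y \<in> V)
     \<and> (\<forall>x y. E x y \<longrightarrow> E y x) \<and> (\<forall>x. \<not> E x x)"

definition induced :: "('a \<Rightarrow> 'a \<Rightarrow> bool) \<Rightarrow> 'a set \<Rightarrow> 'a \<Rightarrow> 'a \<Rightarrow> bool" where
  "induced E W = (\<lambda>x y. E x y \<and> x \<in> W \<and> y \<in> W)"

definition reachable :: "'a set \<Rightarrow> ('a \<Rightarrow> 'a \<Rightarrow> bool) \<Rightarrow> 'a \<Rightarrow> 'a \<Rightarrow> bool" where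
  "reachable V E u w \<longleftrightarrow> (\<lambda>x y. x \<in> V \<and> y \<in> V \<and> E x y)\<^sup>*\<^sup>* u w"

definition connected_graph :: "'a set \<Rightarrow> ('a \<Rightarrow> 'a \<Rightarrow> bool) \<Rightarrow> bool" where
  "connected_graph V E \<longleftrightarrow> V \<noteq> {} \<and> (\<forall>u\<in>V. \<forall>w\<in>V. reachable V E u w)"

definition cut_vertex :: "'a set \<Rightarrow> ('a \<Rightarrow> 'a \<Rightarrow> bool) \<Rightarrow> 'a \<Rightarrow> bool" where
  "cut_vertex V E v \<longleftrightarrow> v \<in> V \<and> (\<exists>u\<in>V - {v}. \<exists>w\<in>V - {v}.
      reachable V E u w \<and> \<not> reachable (V - {v}) (induced E (V - {v})) u w)"

text \<open>n x n matrices over {0,1} as functions nat => nat => bool (True = 1),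
only entries with indices < n are meaningful.\<close>
type_synonym bmat = "nat \<Rightarrow> nat \<Rightarrow> bool"

definition adj_matrix_of :: "'a set \<Rightarrow> ('a \<Rightarrow> 'a \<Rightarrow> bool) \<Rightarrow> 'a list \<Rightarrow> bmat \<Rightarrow> bool" where
  "adj_matrix_of V E xs M \<longleftrightarrow> distinct xs \<and> set xs = V \<and>
     (\<forall>i<length xs. \<forall>j<length xs. M i j = E (xs ! i) (xs ! j))"

definition is_adj_matrix :: "'a set \<Rightarrow> ('a \<Rightarrow> 'a \<Rightarrow> bool) \<Rightarrow> nat \<Rightarrow> bmat \<Rightarrow> bool" where
  "is_adj_matrix V E n M \<longleftrightarrow> (\<exists>xs. length xs = n \<and> adj_matrix_of V E xs M)"

definition bitstring :: "nat \<Rightarrow> bmat \<Rightarrow> bool list" where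
  "bitstring n M = concat (map (\<lambda>j. map (\<lambda>i. M i j) [0..<j]) [0..<n])"

definition lex_le :: "bool list \<Rightarrow> bool list \<Rightarrow> bool" where
  "lex_le xs ys \<longleftrightarrow> xs = ys \<or> (xs, ys) \<in> lexord {(a, b). a < b}"

definition canonical_adj_matrix :: "'a set \<Rightarrow> ('a \<Rightarrow> 'a \<Rightarrow> bool) \<Rightarrow> nat \<Rightarrow> bmat \<Rightarrow> bool" where
  "canonical_adj_matrix V E n M \<longleftrightarrow> is_adj_matrix V E n M \<and>
     (\<forall>M'. is_adj_matrix V E n M' \<longrightarrow> lex_le (bitstring n M') (bitstring n M))"

end

theory Submission
  imports Defs
begin

(*
  Proof idea.  Let xs be the vertex ordering realising the canonical matrix M of the
  connected graph G = (V,E), and let W = set (butlast xs).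

  (1) Canonicity of the truncation holds for every graph: any ordering ys of W extends
      to the ordering ys @ [last xs] of V, whose bit-string is that of ys followed by a
      last column of the same length.  A truncated bit-string exceeding the one of M
      would therefore give an ordering of V beating M.
  (2) In a canonical ordering of a connected graph every vertex xs!j with j > 0 has a
      neighbour xs!i with i < j: otherwise some edge leaves {xs!0,...,xs!(j-1)} towards
      a later vertex xs!k, and swapping positions j and k keeps the first j columns but
      turns the all-zero column j into a column containing a 1, a larger bit-string.
  (3) By (2), every vertex of a prefix of xs is joined to xs!0 inside the prefix, so the
      graph induced on W is connected; hence last xs is not a cut vertex.
*)

lemma bitstring_cong:
  assumes "\<And>i j. i < j \<Longrightarrow> j < n \<Longrightarrow> M i j = M' i j"
  shows "bitstring n M = bitstring n M'"
  unfolding bitstring_def using assms by (auto intro!: arg_cong[where f=concat] map_cong)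

lemma bitstring_Suc: "bitstring (Suc n) M = bitstring n M @ map (\<lambda>i. M i n) [0..<n]"
  by (simp add: bitstring_def)

lemma bitstring_length_eq: "length (bitstring n M) = length (bitstring n M')"
  by (simp add: bitstring_def length_concat comp_def)

lemma bitstring_column_split:
  assumes "j < n"
  shows "\<exists>r. bitstring n M = bitstring j M @ map (\<lambda>i. M i j) [0..<j] @ r"
proof -
  have "[0..<n] = [0..<j] @ j # [Suc j..<n]"
    using assms upt_add_eq_append[of 0 j "n - j"] by (simp add: upt_conv_Cons)
  then show ?thesis by (simp add: bitstring_def)
qed

abbreviation lex_less :: "bool list \<Rightarrow> bool list \<Rightarrow> bool" where
  "lex_less xs ys \<equiv> (xs, ys) \<in> lexord {(a, b). a < b}"

lemma lex_less_append_same_length: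
  assumes "lex_less x y" "length x = length y"
  shows "lex_less (x @ u) (y @ v)"
proof -
  from assms(1) consider (prefix) a w where "y = x @ a # w"
    | (differ) p a b q w where "a < b" "x = p @ a # q" "y = p @ b # w"
    unfolding lexord_def by blast
  then show ?thesis
  proof cases
    case prefix then show ?thesis using assms(2) by simp
  next
    case differ
    then have "x @ u = p @ a # (q @ u)" "y @ v = p @ b # (w @ v)" by simp_all
    then show ?thesis using differ(1) unfolding lexord_def by blast
  qed
qed

lemma lex_less_zero_block:
  assumes "length c = length d" "\<forall>x\<in>set c. \<not> x" "True \<in> set d"
  shows "lex_less (P @ c @ r1) (P @ d @ r2)"
proof -
  obtain ys d' where d: "d = ys @ True # d'" "True \<notin> set ys"
    using split_list_first[OF assms(3)] by blast
  have ys: "ys = replicate (length ys) False"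
    using d(2) by (metis (full_types) replicate_length_same)
  have "c = replicate (length c) False"
    using assms(2) by (metis (full_types) replicate_length_same)
  also have "\<dots> = replicate (length ys) False @ False # replicate (length d') False"
    using assms(1) d(1) by (simp flip: replicate_add replicate_Suc)
  finally have "P @ c @ r1 = (P @ ys) @ False # (replicate (length d') False @ r1)"
    using ys by (metis append.assoc append_Cons)
  moreover have "P @ d @ r2 = (P @ ys) @ True # (d' @ r2)"
    using d by simp
  moreover have "(False, True) \<in> {(a::bool, b). a < b}" by simp
  ultimately show ?thesis unfolding lexord_def by blast
qed

lemma lex_less_not_lex_le:
  assumes "lex_less x y" shows "\<not> lex_le y x"
proof -
  have irrefl: "\<not> lex_less z z" for z
    by (rule lexord_irreflexive) auto
  have "trans {(a::bool, b). a < b}" by (auto simp: trans_def)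
  then show ?thesis unfolding lex_le_def
    using irrefl assms lexord_trans[OF assms] by blast
qed

lemma not_lex_le_imp_lex_less:
  assumes "\<not> lex_le x y" shows "lex_less y x"
proof -
  have "\<forall>a b. (a, b) \<in> {(a::bool, b). a < b} \<or> a = b \<or> (b, a) \<in> {(a, b). a < b}" by auto
  from lexord_linear[OF this, of x y] assms show ?thesis unfolding lex_le_def by blast
qed

lemma bitstring_lex_less_at_column:
  assumes "j < n"
    and "\<And>a b. a < b \<Longrightarrow> b < j \<Longrightarrow> M a b = M' a b"
    and "\<And>a. a < j \<Longrightarrow> \<not> M a j"
    and "i < j" "M' i j"
  shows "lex_less (bitstring n M) (bitstring n M')"
proof -
  obtain r1 where r1: "bitstring n M = bitstring j M @ map (\<lambda>a. M a j) [0..<j] @ r1"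
    using bitstring_column_split[OF assms(1)] by blast
  obtain r2 where r2: "bitstring n M' = bitstring j M' @ map (\<lambda>a. M' a j) [0..<j] @ r2"
    using bitstring_column_split[OF assms(1)] by blast
  have "bitstring j M' = bitstring j M"
    using assms(2) by (metis bitstring_cong)
  moreover have "True \<in> set (map (\<lambda>a. M' a j) [0..<j])"
    using assms(4,5) by force
  moreover have "\<forall>x\<in>set (map (\<lambda>a. M a j) [0..<j]). \<not> x"
    using assms(3) by simp
  ultimately show ?thesis
    using r1 r2 lex_less_zero_block[of "map (\<lambda>a. M a j) [0..<j]" "map (\<lambda>a. M' a j) [0..<j]"
        "bitstring j M" r1 r2] by simp
qed

lemma rtranclp_leaves_set:
  assumes "R\<^sup>*\<^sup>* u w" "u \<in> S" "w \<notin> S" shows "\<exists>x y. R x y \<and> x \<in> S \<and> y \<notin> S"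
  using assms by (induction rule: rtranclp_induct) auto

lemma rtranclp_sym:
  assumes "\<And>x y. R x y \<Longrightarrow> R y x" "R\<^sup>*\<^sup>* u w" shows "R\<^sup>*\<^sup>* w u"
  using assms(2) by (induction rule: rtranclp_induct)
    (auto intro: converse_rtranclp_into_rtranclp assms(1))

lemma is_adj_matrix_of_ordering:
  assumes "distinct zs" "set zs = V" "length zs = n"
  shows "is_adj_matrix V E n (\<lambda>a b. E (zs ! a) (zs ! b))"
  using assms unfolding is_adj_matrix_def adj_matrix_of_def by auto

lemma not_cut_vertex_if_rest_connected:
  assumes "connected_graph (V - {v}) (induced E (V - {v}))"
  shows "\<not> cut_vertex V E v"
  using assms unfolding cut_vertex_def connected_graph_def by auto

lemma distinct_last_butlast:
  assumes "distinct xs" "xs \<noteq> []"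
  shows "last xs \<notin> set (butlast xs)" "set xs = insert (last xs) (set (butlast xs))"
proof -
  have "xs = butlast xs @ [last xs]" using assms(2) by simp
  then have "distinct (butlast xs @ [last xs])" "set xs = set (butlast xs @ [last xs])"
    using assms(1) by metis+
  then show "last xs \<notin> set (butlast xs)" "set xs = insert (last xs) (set (butlast xs))"
    by auto
qed

lemma canonical_adj_matrix_butlast:
  assumes canon: "canonical_adj_matrix V E n M"
    and xs: "length xs = n" "adj_matrix_of V E xs M" and "n \<ge> 1"
  defines "W \<equiv> set (butlast xs)"
  shows "canonical_adj_matrix W (induced E W) (n - 1) M"
proof -
  have dist: "distinct xs" and setx: "set xs = V"
    and Mx: "\<And>i j. i < n \<Longrightarrow> j < n \<Longrightarrow> M i j = E (xs ! i) (xs ! j)"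
    using xs unfolding adj_matrix_of_def by auto
  have "xs \<noteq> []" using xs(1) \<open>n \<ge> 1\<close> by auto
  then have last_notin: "last xs \<notin> W" and V_eq: "V = insert (last xs) W"
    using distinct_last_butlast[OF dist] setx unfolding W_def by auto
  have butlast_entry: "butlast xs ! i = xs ! i" "xs ! i \<in> W" if "i < n - 1" for i
    using that xs(1) nth_mem[of i "butlast xs"] unfolding W_def by (auto simp: nth_butlast)
  have "adj_matrix_of W (induced E W) (butlast xs) M"
    unfolding adj_matrix_of_def induced_def
    using dist xs(1) Mx butlast_entry by (auto simp: W_def distinct_butlast)
  then have is_adj: "is_adj_matrix W (induced E W) (n - 1) M"
    unfolding is_adj_matrix_def using xs(1) length_butlast by metis
  have "lex_le (bitstring (n - 1) M') (bitstring (n - 1) M)"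
    if "is_adj_matrix W (induced E W) (n - 1) M'" for M'
  proof (rule ccontr)
    assume "\<not> lex_le (bitstring (n - 1) M') (bitstring (n - 1) M)"
    then have gt: "lex_less (bitstring (n - 1) M) (bitstring (n - 1) M')"
      by (rule not_lex_le_imp_lex_less)
    from that obtain ys where ys: "length ys = n - 1" "distinct ys" "set ys = W"
      "\<And>i j. i < n - 1 \<Longrightarrow> j < n - 1 \<Longrightarrow> M' i j = induced E W (ys ! i) (ys ! j)"
      unfolding is_adj_matrix_def adj_matrix_of_def by auto
    define zs where "zs = ys @ [last xs]"
    define M2 where "M2 = (\<lambda>a b. E (zs ! a) (zs ! b))"
    have "is_adj_matrix V E n M2" unfolding M2_def
      by (rule is_adj_matrix_of_ordering) (use ys last_notin V_eq \<open>n \<ge> 1\<close> in \<open>auto simp: zs_def\<close>)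
    then have le: "lex_le (bitstring n M2) (bitstring n M)"
      using canon unfolding canonical_adj_matrix_def by blast
    have "bitstring (n - 1) M2 = bitstring (n - 1) M'"
    proof (rule bitstring_cong)
      fix a b assume ab: "a < b" "b < n - 1"
      then have "ys ! a \<in> W" "ys ! b \<in> W" using ys(1,3) by (metis less_trans nth_mem)+
      then show "M2 a b = M' a b"
        using ab ys(1) ys(4)[of a b] by (simp add: M2_def zs_def nth_append induced_def)
    qed
    then have "lex_less (bitstring (Suc (n - 1)) M) (bitstring (Suc (n - 1)) M2)"
      using lex_less_append_same_length[OF gt bitstring_length_eq] by (simp add: bitstring_Suc)
    then show False using le lex_less_not_lex_le \<open>n \<ge> 1\<close> by simp
  qed
  with is_adj show ?thesis unfolding canonical_adj_matrix_def by blast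
qed

lemma canonical_ordering_earlier_neighbour:
  assumes conn: "connected_graph V E" and canon: "canonical_adj_matrix V E n M"
    and xs: "length xs = n" "adj_matrix_of V E xs M" and j: "0 < j" "j < n"
  shows "\<exists>i<j. E (xs ! i) (xs ! j)"
proof (rule ccontr)
  assume no_earlier: "\<not> (\<exists>i<j. E (xs ! i) (xs ! j))"
  have dist: "distinct xs" and setx: "set xs = V"
    and Mx: "\<And>a b. a < n \<Longrightarrow> b < n \<Longrightarrow> M a b = E (xs ! a) (xs ! b)"
    using xs unfolding adj_matrix_of_def by auto
  let ?S = "set (take j xs)"
  have in_S: "xs ! a \<in> ?S \<longleftrightarrow> a < j" if "a < n" for a
    using that j xs(1) dist by (auto simp: in_set_conv_nth nth_eq_iff_index_eq)
  have "xs ! 0 \<in> V" "xs ! j \<in> V" using j xs(1) setx nth_mem[of 0 xs] nth_mem[of j xs] by auto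
  then have "reachable V E (xs ! 0) (xs ! j)"
    using conn unfolding connected_graph_def by blast
  moreover have "xs ! 0 \<in> ?S" "xs ! j \<notin> ?S" using in_S j by auto
  ultimately obtain x y where xy: "E x y" "x \<in> ?S" "y \<in> V" "y \<notin> ?S"
    unfolding reachable_def using rtranclp_leaves_set[of _ "xs ! 0" "xs ! j" ?S] by blast
  obtain i where i: "i < j" "x = xs ! i"
    using xy(2) j xs(1) by (auto simp: in_set_conv_nth)
  obtain k where k: "k < n" "y = xs ! k"
    using xy(3) setx xs(1) by (auto simp: in_set_conv_nth)
  have "\<not> k < j" "k \<noteq> j" using in_S[OF k(1)] xy(1,4) no_earlier i k by auto
  then have "j < k" by simp
  text \<open>Swapping positions j and k moves the neighbour y of x into position j.\<close>
  define zs where "zs = xs[j := xs ! k, k := xs ! j]"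
  define M2 where "M2 = (\<lambda>a b. E (zs ! a) (zs ! b))"
  have "is_adj_matrix V E n M2" unfolding M2_def
    by (rule is_adj_matrix_of_ordering) (use \<open>j < k\<close> k(1) xs(1) dist setx in \<open>simp_all add: zs_def\<close>)
  then have le: "lex_le (bitstring n M2) (bitstring n M)"
    using canon unfolding canonical_adj_matrix_def by blast
  have zs_front: "zs ! a = xs ! a" if "a < j" for a
    using that \<open>j < k\<close> by (simp add: zs_def)
  have "lex_less (bitstring n M) (bitstring n M2)"
  proof (rule bitstring_lex_less_at_column[OF j(2) _ _ i(1)])
    show "M a b = M2 a b" if "a < b" "b < j" for a b
      using that j(2) by (simp add: M2_def zs_front Mx)
    show "\<not> M a j" if "a < j" for a
      using that j(2) no_earlier Mx by auto
    show "M2 i j"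
      using i xy(1) k \<open>j < k\<close> xs(1) by (simp add: M2_def zs_front zs_def)
  qed
  then show False using le lex_less_not_lex_le by blast
qed

lemma connected_prefix_of_earlier_neighbours:
  assumes sym: "\<And>x y. E x y \<Longrightarrow> E y x"
    and "0 < m" "m \<le> length xs"
    and earlier: "\<And>j. 0 < j \<Longrightarrow> j < m \<Longrightarrow> \<exists>i<j. E (xs ! i) (xs ! j)"
  defines "W \<equiv> set (take m xs)"
  shows "connected_graph W (induced E W)"
proof -
  let ?R = "\<lambda>x y. x \<in> W \<and> y \<in> W \<and> induced E W x y"
  have in_W: "xs ! a \<in> W" if "a < m" for a
    using that \<open>m \<le> length xs\<close> unfolding W_def in_set_conv_nth by force
  have from_first: "?R\<^sup>*\<^sup>* (xs ! 0) (xs ! j)" if "j < m" for j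
    using that
  proof (induction j rule: less_induct)
    case (less j)
    show ?case
    proof (cases "j = 0")
      case False
      then obtain i where i: "i < j" "E (xs ! i) (xs ! j)" using earlier less.prems by blast
      then have "?R (xs ! i) (xs ! j)" using in_W less.prems unfolding induced_def by simp
      with less.IH[OF i(1)] i(1) less.prems show ?thesis by (simp add: rtranclp.rtrancl_into_rtrancl)
    qed simp
  qed
  have sym_R: "\<And>x y. ?R x y \<Longrightarrow> ?R y x" using sym unfolding induced_def by blast
  have "?R\<^sup>*\<^sup>* u w" if "u \<in> W" "w \<in> W" for u w
  proof -
    have "\<exists>a<m. v = xs ! a" if "v \<in> W" for v
      using that \<open>m \<le> length xs\<close> unfolding W_def in_set_conv_nth by force
    then obtain a b where ab: "a < m" "u = xs ! a" "b < m" "w = xs ! b"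
      using \<open>u \<in> W\<close> \<open>w \<in> W\<close> by blast
    have "?R\<^sup>*\<^sup>* u (xs ! 0)" using rtranclp_sym[OF sym_R from_first[OF ab(1)]] ab(2) by simp
    also have "?R\<^sup>*\<^sup>* (xs ! 0) w" using from_first[OF ab(3)] ab(4) by simp
    finally show ?thesis .
  qed
  moreover have "W \<noteq> {}" using in_W[OF \<open>0 < m\<close>] by blast
  ultimately show ?thesis unfolding connected_graph_def reachable_def by blast
qed

theorem mainTheorem7:
  fixes V :: "'a set" and E :: "'a \<Rightarrow> 'a \<Rightarrow> bool" and n :: nat and M :: bmat
    and xs :: "'a list"
  assumes "simple_graph V E"
    and "connected_graph V E"
    and "n \<ge> 2"
    and "canonical_adj_matrix V E n M"
    and "length xs = n" and "adj_matrix_of V E xs M"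
  shows "canonical_adj_matrix (set (butlast xs)) (induced E (set (butlast xs))) (n - 1) M
       \<and> connected_graph (set (butlast xs)) (induced E (set (butlast xs)))
       \<and> \<not> cut_vertex V E (last xs)"
proof -
  let ?W = "set (butlast xs)"
  have canonical: "canonical_adj_matrix ?W (induced E ?W) (n - 1) M"
    using canonical_adj_matrix_butlast[OF assms(4-6)] assms(3) by simp
  have "connected_graph (set (take (n - 1) xs)) (induced E (set (take (n - 1) xs)))"
  proof (rule connected_prefix_of_earlier_neighbours)
    show "\<And>x y. E x y \<Longrightarrow> E y x" using assms(1) unfolding simple_graph_def by blast
    show "\<exists>i<j. E (xs ! i) (xs ! j)" if "0 < j" "j < n - 1" for j
      using canonical_ordering_earlier_neighbour[OF assms(2,4-6)] that by simp
  qed (use assms(3,5) in simp_all)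
  then have connected: "connected_graph ?W (induced E ?W)"
    by (simp add: butlast_conv_take assms(5))
  have "xs \<noteq> []" using assms(3,5) by auto
  then have "?W = V - {last xs}"
    using assms(6) distinct_last_butlast unfolding adj_matrix_of_def by fastforce
  with connected have "\<not> cut_vertex V E (last xs)"
    by (simp add: not_cut_vertex_if_rest_connected)
  with canonical connected show ?thesis by blast
qed

end
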